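(* Let $\mathsf G=(A,B,C,D)$ with $\rho(A)<1$. Then $\|\mathcal M_\infty(\mathsf G)\|_{\mathrm{op}}=\|\mathsf G\|_{\mathcal H_2^{\mathrm{op}}}$.
   Context: $\mathcal M_k(\mathsf G):=[D|CB|CAB|\dots|CA^{k-2}B]$ and $\|\mathcal M_\infty(\mathsf G)\|_{\mathrm{op}}:=\lim_{k\to\infty}\|\mathcal M_k(\mathsf G)\|_{\mathrm{op}}$. The transfer function is $\mathsf G(z)=C(zI-A)^{-1}B+D\in\mathbb C^{m\times p}$ and $\|\mathsf G\|_{\mathcal H_2^{\mathrm{op}}}:=\max_{v\in\mathbb R^m,\|v\|_2=1}\sqrt{\frac1{2\pi}\int_0^{2\pi}\|v^\top\mathsf G(e^{i\theta})\|_2^2d\theta}$. *)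

theory Defs
  imports "HOL-Analysis.Analysis"
begin

definition cmat :: "real^'c^'r \<Rightarrow> complex^'c^'r" where
  "cmat M = (\<chi> i j. complex_of_real (M $ i $ j))"

primrec mpow :: "real^'n^'n \<Rightarrow> nat \<Rightarrow> real^'n^'n" where
  "mpow M 0 = mat 1"
| "mpow M (Suc k) = M ** mpow M k"

definition is_eigenvalue :: "real^'n^'n \<Rightarrow> complex \<Rightarrow> bool" where
  "is_eigenvalue M l \<longleftrightarrow> (\<exists>x::complex^'n. x \<noteq> 0 \<and> cmat M *v x = l *s x)"

definition spectral_radius :: "real^'n^'n \<Rightarrow> real" where
  "spectral_radius M = Sup {cmod l | l. is_eigenvalue M l}"

text \<open>Block matrix M_k = [D | CB | CAB | ... | CA^(k-2)B] acting on the block vector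
  (x 0, ..., x (k-1)) (each block in R^p): block 0 is D, block j (1 <= j < k) is C A^(j-1) B.\<close>
definition Mk_apply :: "real^'n^'n \<Rightarrow> real^'p^'n \<Rightarrow> real^'n^'m \<Rightarrow> real^'p^'m
    \<Rightarrow> nat \<Rightarrow> (nat \<Rightarrow> real^'p) \<Rightarrow> real^'m" where
  "Mk_apply A B C D k x =
     (if k = 0 then 0 else D *v x 0 + (\<Sum>j\<in>{1..<k}. (C ** mpow A (j - 1) ** B) *v x j))"

text \<open>Euclidean operator norm (largest singular value) of M_k : R^(kp) \<rightarrow> R^m,
  where R^(kp) carries the Euclidean norm of the stacked blocks.\<close>
definition Mk_opnorm :: "real^'n^'n \<Rightarrow> real^'p^'n \<Rightarrow> real^'n^'m \<Rightarrow> real^'p^'m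
    \<Rightarrow> nat \<Rightarrow> real" where
  "Mk_opnorm A B C D k =
     (SUP x \<in> {x. (\<Sum>j<k. (norm (x j))\<^sup>2) \<le> 1}. norm (Mk_apply A B C D k x))"

definition transfer :: "real^'n^'n \<Rightarrow> real^'p^'n \<Rightarrow> real^'n^'m \<Rightarrow> real^'p^'m
    \<Rightarrow> complex \<Rightarrow> complex^'p^'m" where
  "transfer A B C D z = cmat C ** matrix_inv (mat z - cmat A) ** cmat B + cmat D"

definition H2op_norm :: "real^'n^'n \<Rightarrow> real^'p^'n \<Rightarrow> real^'n^'m \<Rightarrow> real^'p^'m \<Rightarrow> real" where
  "H2op_norm A B C D =
     (SUP v \<in> {v::real^'m. norm v = 1}.
        sqrt (1 / (2 * pi) * integral {0..2 * pi}
          (\<lambda>\<theta>. (norm ((\<chi> i. complex_of_real (v $ i)) v* transfer A B C D (cis \<theta>)))\<^sup>2)))"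

end

(* Write M_j for the Markov parameters: M_0 = D and M_j = C A^(j-1) B for j > 0, so that
   M_k = [M_0 | ... | M_(k-1)].  Since the norm of a matrix equals that of its transpose,
   the operator norm of M_k is the supremum over unit vectors v of (sum_(j<k) |v^T M_j|^2)^(1/2).

   As rho(A) < 1, the entries of A^j decay like q^j for some q < 1 (via the Jordan normal form).
   Hence the Neumann series of (zI - A)^-1 converges on the unit circle and
   v^T G(e^(i theta)) = sum_j e^(-i j theta) v^T M_j, a Fourier series whose coefficients decay
   geometrically.  Parseval's identity then gives
   (1/2pi) int |v^T G(e^(i theta))|^2 dtheta = sum_j |v^T M_j|^2.
   The tails of these series are bounded by C q^(2k) uniformly in v, so the suprema of the
   partial sums converge to the supremum of the full sums, which is the H2-op norm. *)

theory Submission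
  imports Defs "Jordan_Normal_Form.Spectral_Radius"
begin

(* Jordan_Normal_Form's vector indexing and scalar product would shadow the notation of
   HOL-Analysis. *)
no_notation Matrix.vec_index (infixl "$" 100)
no_notation Matrix.scalar_prod (infix "\<bullet>" 70)
hide_const (open) Matrix.mat Matrix.vec Spectral_Radius.spectral_radius

lemma cmat_mult: "cmat (X ** Y) = cmat X ** cmat Y"
  by (simp add: cmat_def matrix_matrix_mult_def Finite_Cartesian_Product.vec_eq_iff)

lemma cmat_mat_1: "cmat (mat 1) = mat 1"
  by (simp add: cmat_def Finite_Cartesian_Product.mat_def Finite_Cartesian_Product.vec_eq_iff fun_eq_iff)

lemma mpow_Suc_right: "mpow M (Suc k) = mpow M k ** M"
  by (induction k) (simp_all add: matrix_mul_lid matrix_mul_rid matrix_mul_assoc)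

(* A fixed enumeration of the index type, used to move matrices between HOL-Analysis
   and Jordan_Normal_Form, whose matrices are indexed by natural numbers. *)
definition jnf_index :: "nat \<Rightarrow> 'n::finite" where
  "jnf_index = (SOME f. bij_betw f {0..<CARD('n)} UNIV)"

definition jnf_pos :: "'n::finite \<Rightarrow> nat" where
  "jnf_pos = inv_into {0..<CARD('n)} jnf_index"

lemma bij_jnf_index: "bij_betw (jnf_index :: nat \<Rightarrow> 'n::finite) {0..<CARD('n)} UNIV"
  using ex_bij_betw_nat_finite[of "UNIV :: 'n set", simplified] unfolding jnf_index_def
  by (metis (mono_tags, lifting) someI_ex)

lemma jnf_index_pos [simp]: "jnf_index (jnf_pos a) = a"
  unfolding jnf_pos_def by (rule bij_betw_inv_into_right[OF bij_jnf_index]) simp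

lemma jnf_pos_less [simp]: "jnf_pos (a :: 'n::finite) < CARD('n)"
  unfolding jnf_pos_def using bij_betw_inv_into[OF bij_jnf_index] by (auto simp: bij_betw_def)

lemma jnf_pos_index [simp]: "i < CARD('n) \<Longrightarrow> jnf_pos (jnf_index i :: 'n::finite) = i"
  unfolding jnf_pos_def by (rule bij_betw_inv_into_left[OF bij_jnf_index]) simp

lemma sum_jnf_index: "(\<Sum>t=0..<CARD('n). g (jnf_index t)) = (\<Sum>a\<in>(UNIV :: 'n::finite set). g a)"
  by (rule sum.reindex_bij_betw[OF bij_jnf_index])

definition to_jnf :: "'a^'n^'n::finite \<Rightarrow> 'a Matrix.mat" where
  "to_jnf M = Matrix.mat CARD('n) CARD('n) (\<lambda>(i, j). M $ jnf_index i $ jnf_index j)"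

definition to_jnf_vec :: "'a^'n::finite \<Rightarrow> 'a Matrix.vec" where
  "to_jnf_vec x = Matrix.vec CARD('n) (\<lambda>i. x $ jnf_index i)"

lemma to_jnf_carrier: "to_jnf (M :: 'a^'n^'n) \<in> carrier_mat CARD('n) CARD('n)"
  by (simp add: to_jnf_def)

lemma to_jnf_mult: "to_jnf (X ** Y) = to_jnf X * to_jnf (Y :: 'a::comm_semiring_1^'n^'n)"
  by (rule eq_matI)
    (auto simp: to_jnf_def matrix_matrix_mult_def scalar_prod_def simp flip: sum_jnf_index)

lemma to_jnf_mat_1: "to_jnf (mat 1 :: 'a::comm_semiring_1^'n^'n) = 1\<^sub>m CARD('n)"
  by (rule eq_matI) (auto simp: to_jnf_def Finite_Cartesian_Product.mat_def dest: jnf_pos_index)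

lemma to_jnf_mpow: "to_jnf (cmat (mpow A k)) = to_jnf (cmat A) ^\<^sub>m k"
proof (induction k)
  case 0
  show ?case by (simp add: cmat_mat_1 to_jnf_mat_1 to_jnf_carrier[THEN carrier_matD(1)])
next
  case (Suc k)
  show ?case by (simp only: mpow_Suc_right cmat_mult to_jnf_mult Suc.IH pow_mat.simps)
qed

lemma to_jnf_vec_carrier: "to_jnf_vec (x :: 'a^'n) \<in> carrier_vec CARD('n)"
  by (simp add: to_jnf_vec_def)

lemma to_jnf_vec_inject: "to_jnf_vec x = to_jnf_vec y \<longleftrightarrow> x = y"
proof
  assume eq: "to_jnf_vec x = to_jnf_vec y"
  have "x $ a = y $ a" for a
    using arg_cong[OF eq, of "\<lambda>v. vec_index v (jnf_pos a)"] by (simp add: to_jnf_vec_def)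
  then show "x = y" by (simp add: Finite_Cartesian_Product.vec_eq_iff)
qed simp

lemma to_jnf_vec_zero: "to_jnf_vec (0 :: 'a::zero^'n) = 0\<^sub>v CARD('n)"
  by (rule eq_vecI) (simp_all add: to_jnf_vec_def)

lemma to_jnf_vec_smult: "to_jnf_vec (l *s x) = l \<cdot>\<^sub>v to_jnf_vec (x :: 'a::times^'n)"
  by (rule eq_vecI) (simp_all add: to_jnf_vec_def)

lemma to_jnf_mult_vec: "to_jnf M *\<^sub>v to_jnf_vec x = to_jnf_vec (M *v (x :: 'a::comm_semiring_1^'n))"
  by (rule eq_vecI)
    (auto simp: to_jnf_def to_jnf_vec_def matrix_vector_mult_def scalar_prod_def simp flip: sum_jnf_index)

lemma to_jnf_vec_surj:
  assumes "v \<in> carrier_vec CARD('n::finite)"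
  shows "v = to_jnf_vec (\<chi> a::'n. vec_index v (jnf_pos a))"
  using assms by (intro eq_vecI) (auto simp: to_jnf_vec_def)

lemma eigenvalue_to_jnf_iff:
  fixes M :: "'a::comm_ring_1^'n^'n"
  shows "eigenvalue (to_jnf M) l \<longleftrightarrow> (\<exists>x. x \<noteq> 0 \<and> M *v x = l *s x)"
proof
  assume "eigenvalue (to_jnf M) l"
  then obtain v where v: "v \<in> carrier_vec CARD('n)" "v \<noteq> 0\<^sub>v CARD('n)" "to_jnf M *\<^sub>v v = l \<cdot>\<^sub>v v"
    unfolding eigenvalue_def eigenvector_def by (auto simp: to_jnf_def)
  define x where "x = (\<chi> a::'n. vec_index v (jnf_pos a))"
  have v_x: "v = to_jnf_vec x" unfolding x_def by (rule to_jnf_vec_surj[OF v(1)])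
  have "x \<noteq> 0" using v(2) by (auto simp: v_x to_jnf_vec_zero)
  moreover have "M *v x = l *s x"
    using v(3) unfolding v_x to_jnf_mult_vec to_jnf_vec_smult[symmetric] to_jnf_vec_inject .
  ultimately show "\<exists>x. x \<noteq> 0 \<and> M *v x = l *s x" by blast
next
  assume "\<exists>x. x \<noteq> 0 \<and> M *v x = l *s x"
  then obtain x where "x \<noteq> 0" "M *v x = l *s x" by blast
  then have "eigenvector (to_jnf M) (to_jnf_vec x) l"
    unfolding eigenvector_def carrier_matD(1)[OF to_jnf_carrier]
    by (simp add: to_jnf_vec_carrier to_jnf_mult_vec to_jnf_vec_inject
        flip: to_jnf_vec_smult to_jnf_vec_zero)
  then show "eigenvalue (to_jnf M) l" unfolding eigenvalue_def ..
qed

section \<open>Spectral radius and decay of matrix powers\<close>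

lemma is_eigenvalue_iff_to_jnf: "is_eigenvalue A l \<longleftrightarrow> l \<in> spectrum (to_jnf (cmat A))"
  by (simp add: is_eigenvalue_def spectrum_def eigenvalue_to_jnf_iff)

lemma spectral_radius_to_jnf:
  "Defs.spectral_radius A = Spectral_Radius.spectral_radius (to_jnf (cmat (A :: real^'n^'n)))"
proof -
  let ?J = "to_jnf (cmat A)"
  have "{cmod l | l. is_eigenvalue A l} = norm ` spectrum ?J"
    by (auto simp: is_eigenvalue_iff_to_jnf)
  moreover have "finite (spectrum ?J)" "spectrum ?J \<noteq> {}"
    using card_finite_spectrum(1)[OF to_jnf_carrier] spectrum_non_empty[OF to_jnf_carrier] by simp_all
  ultimately show ?thesis
    unfolding Defs.spectral_radius_def Spectral_Radius.spectral_radius_def by (simp add: cSup_eq_Max)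
qed

lemma cmod_le_spectral_radius: "is_eigenvalue A l \<Longrightarrow> cmod l \<le> Defs.spectral_radius A"
  unfolding spectral_radius_to_jnf is_eigenvalue_iff_to_jnf
  by (rule spectral_radius_mem_max(2)[OF to_jnf_carrier]) simp_all

lemma spectral_radius_attained: "\<exists>l. is_eigenvalue A l \<and> cmod l = Defs.spectral_radius A"
  using spectral_radius_mem_max(1)[OF to_jnf_carrier, of "cmat A"]
  unfolding spectral_radius_to_jnf is_eigenvalue_iff_to_jnf by force

lemma mpow_scaleR: "mpow (r *\<^sub>R M) k = r ^ k *\<^sub>R mpow M k"
  by (induction k) (simp_all add: matrix_scalar_ac scalar_matrix_assoc mult.commute)

lemma is_eigenvalue_scaleR:
  assumes "r \<noteq> 0" "is_eigenvalue (r *\<^sub>R A) l"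
  shows "is_eigenvalue A (l / complex_of_real r)"
proof -
  obtain x where x: "x \<noteq> 0" "cmat (r *\<^sub>R A) *v x = l *s x"
    using assms(2) unfolding is_eigenvalue_def by blast
  have "cmat (r *\<^sub>R A) *v x = complex_of_real r *s (cmat A *v x)"
    by (simp add: cmat_def matrix_vector_mult_def vector_scalar_mult_def sum_distrib_left mult.assoc)
  with x(2) have eq: "complex_of_real r *s (cmat A *v x) = l *s x" by simp
  have "(cmat A *v x) $ i = (l / complex_of_real r) * x $ i" for i
    using arg_cong[OF eq, of "\<lambda>y. y $ i"] assms(1) by (simp add: field_simps)
  then have "cmat A *v x = (l / complex_of_real r) *s x"
    by (simp add: Finite_Cartesian_Product.vec_eq_iff)
  with x(1) show ?thesis unfolding is_eigenvalue_def by blast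
qed

lemma mpow_entries_bounded:
  assumes "Defs.spectral_radius A < 1"
  shows "\<exists>c. \<forall>k a b. \<bar>mpow A k $ a $ b\<bar> \<le> c"
proof -
  obtain c where c: "norm_bound (to_jnf (cmat A) ^\<^sub>m k) c" for k
    using spectral_radius_jnf_norm_bound_less_1_upper_triangular[OF to_jnf_carrier]
      assms[unfolded spectral_radius_to_jnf] by blast
  have "\<bar>mpow A k $ a $ b\<bar> \<le> c" for k a b
    using c[of k, folded to_jnf_mpow] unfolding norm_bound_def
    by (force simp: to_jnf_def cmat_def dest: spec[of _ "jnf_pos a"] spec[of _ "jnf_pos b"])
  then show ?thesis by blast
qed

(* With r > 1 and r * \<rho>(A) < 1, the powers of r A stay bounded, so A^k = O(r^-k). *)
lemma mpow_entries_decay: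
  assumes "Defs.spectral_radius A < 1"
  shows "\<exists>c q. 0 < q \<and> q < 1 \<and> (\<forall>k a b. \<bar>mpow A k $ a $ b\<bar> \<le> c * q ^ k)"
proof -
  define \<rho> where "\<rho> = Defs.spectral_radius A"
  have \<rho>: "0 \<le> \<rho>" "\<rho> < 1"
    using spectral_radius_attained[of A] assms unfolding \<rho>_def by (metis norm_ge_zero)+
  define r where "r = 2 / (1 + \<rho>)"
  have r: "1 < r" "r * \<rho> < 1" using \<rho> by (simp_all add: r_def field_simps)
  obtain l where l: "is_eigenvalue (r *\<^sub>R A) l" "cmod l = Defs.spectral_radius (r *\<^sub>R A)"
    using spectral_radius_attained by blast
  have "cmod l / r \<le> \<rho>"
    using cmod_le_spectral_radius[OF is_eigenvalue_scaleR[OF _ l(1)]] r(1)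
    by (simp add: \<rho>_def norm_divide)
  then have "Defs.spectral_radius (r *\<^sub>R A) < 1"
    using l(2) r by (simp add: field_simps)
  then obtain c where c: "\<bar>mpow (r *\<^sub>R A) k $ a $ b\<bar> \<le> c" for k a b
    using mpow_entries_bounded by blast
  have "\<bar>mpow A k $ a $ b\<bar> \<le> c * (1 / r) ^ k" for k a b
    using c[of k a b] r(1) by (simp add: mpow_scaleR abs_mult field_simps)
  with r(1) show ?thesis by (intro exI[of _ c] exI[of _ "1 / r"]) simp
qed

section \<open>Square sums of geometrically bounded sequences\<close>

lemma summable_power2_geometric_bound:
  fixes f :: "nat \<Rightarrow> real"
  assumes q: "0 \<le> q" "q < 1" and f: "\<And>j. \<bar>f j\<bar> \<le> K * q ^ j"
  shows "summable (\<lambda>j. (f j)\<^sup>2)"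
proof (rule summable_comparison_test')
  show "summable (\<lambda>j. K\<^sup>2 * (q\<^sup>2) ^ j)"
    using q by (intro summable_mult summable_geometric) (simp add: abs_square_less_1)
  fix j
  have "\<bar>f j\<bar>\<^sup>2 \<le> (K * q ^ j)\<^sup>2" using f[of j] by (intro power_mono) auto
  then show "norm ((f j)\<^sup>2) \<le> K\<^sup>2 * (q\<^sup>2) ^ j"
    by (simp add: power_mult_distrib power_mult[symmetric] mult.commute)
qed

lemma suminf_power2_tail_le:
  fixes f :: "nat \<Rightarrow> real"
  assumes q: "0 \<le> q" "q < 1" and f: "\<And>j. \<bar>f j\<bar> \<le> K * q ^ j"
  shows "(\<Sum>j. (f j)\<^sup>2) - (\<Sum>j<k. (f j)\<^sup>2) \<le> K\<^sup>2 * (q\<^sup>2) ^ k / (1 - q\<^sup>2)"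
proof -
  have q2: "norm (q\<^sup>2) < 1" using q by (simp add: abs_square_less_1)
  have shifted: "\<bar>f (j + k)\<bar> \<le> (K * q ^ k) * q ^ j" for j
    using f[of "j + k"] by (simp add: power_add mult_ac)
  have "(\<Sum>j. (f j)\<^sup>2) - (\<Sum>j<k. (f j)\<^sup>2) = (\<Sum>j. (f (j + k))\<^sup>2)"
    using suminf_split_initial_segment[OF summable_power2_geometric_bound[OF q f], of k] by simp
  also have "\<dots> \<le> (\<Sum>j. (K * q ^ k)\<^sup>2 * (q\<^sup>2) ^ j)"
  proof (rule suminf_le)
    show "(f (j + k))\<^sup>2 \<le> (K * q ^ k)\<^sup>2 * (q\<^sup>2) ^ j" for j
      using power_mono[OF shifted[of j] abs_ge_zero, of 2]
      by (simp add: power_mult_distrib power_mult[symmetric] mult.commute)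
    show "summable (\<lambda>j. (f (j + k))\<^sup>2)"
      using summable_power2_geometric_bound[OF q shifted] .
    show "summable (\<lambda>j. (K * q ^ k)\<^sup>2 * (q\<^sup>2) ^ j)"
      using q2 by (intro summable_mult summable_geometric)
  qed
  also have "\<dots> = (K * q ^ k)\<^sup>2 / (1 - q\<^sup>2)"
    using sums_unique[OF sums_mult[OF geometric_sums[OF q2], of "(K * q ^ k)\<^sup>2"]] by simp
  also have "\<dots> = K\<^sup>2 * (q\<^sup>2) ^ k / (1 - q\<^sup>2)"
    by (simp add: power_mult_distrib power_even_eq[symmetric] power_mult)
  finally show ?thesis .
qed

lemma tendsto_SUP_sqrt_partial_sums:
  fixes g :: "'a \<Rightarrow> nat \<Rightarrow> real"
  assumes X: "X \<noteq> {}" and q: "0 \<le> q" "q < 1" and g: "\<And>v j. v \<in> X \<Longrightarrow> \<bar>g v j\<bar> \<le> K * q ^ j"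
  shows "(\<lambda>k. SUP v\<in>X. sqrt (\<Sum>j<k. (g v j)\<^sup>2)) \<longlonglongrightarrow> (SUP v\<in>X. sqrt (\<Sum>j. (g v j)\<^sup>2))"
proof -
  define e where "e k = sqrt (K\<^sup>2 / (1 - q\<^sup>2) * (q\<^sup>2) ^ k)" for k
  have q2: "q\<^sup>2 < 1" using q by (simp add: abs_square_less_1)
  have partial_le: "sqrt (\<Sum>j<k. (g v j)\<^sup>2) \<le> sqrt (\<Sum>j. (g v j)\<^sup>2)" if "v \<in> X" for v k
    using sum_le_suminf[OF summable_power2_geometric_bound[OF q g[OF that]]] by simp
  have full_le: "sqrt (\<Sum>j. (g v j)\<^sup>2) \<le> sqrt (\<Sum>j<k. (g v j)\<^sup>2) + e k" if "v \<in> X" for v k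
  proof -
    have "sqrt (\<Sum>j. (g v j)\<^sup>2) \<le> sqrt (\<Sum>j<k. (g v j)\<^sup>2) + sqrt ((\<Sum>j. (g v j)\<^sup>2) - (\<Sum>j<k. (g v j)\<^sup>2))"
      using sqrt_add_le_add_sqrt[of "\<Sum>j<k. (g v j)\<^sup>2" "(\<Sum>j. (g v j)\<^sup>2) - (\<Sum>j<k. (g v j)\<^sup>2)"]
        sum_le_suminf[OF summable_power2_geometric_bound[OF q g[OF that]], of "{..<k}"]
      by (simp add: sum_nonneg)
    moreover have "sqrt ((\<Sum>j. (g v j)\<^sup>2) - (\<Sum>j<k. (g v j)\<^sup>2)) \<le> e k"
      unfolding e_def using suminf_power2_tail_le[OF q g[OF that], of k]
      by (intro real_sqrt_le_mono) simp
    ultimately show ?thesis by linarith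
  qed
  have full_bound: "sqrt (\<Sum>j. (g v j)\<^sup>2) \<le> e 0" if "v \<in> X" for v
    using full_le[OF that, of 0] by simp
  then have bdd: "bdd_above ((\<lambda>v. sqrt (\<Sum>j. (g v j)\<^sup>2)) ` X)" by (rule bdd_aboveI2)
  have upper: "(SUP v\<in>X. sqrt (\<Sum>j<k. (g v j)\<^sup>2)) \<le> (SUP v\<in>X. sqrt (\<Sum>j. (g v j)\<^sup>2))" for k
    using X bdd partial_le by (intro cSUP_mono) auto
  have lower: "(SUP v\<in>X. sqrt (\<Sum>j. (g v j)\<^sup>2)) - e k \<le> (SUP v\<in>X. sqrt (\<Sum>j<k. (g v j)\<^sup>2))" for k
  proof -
    have bdd_partial: "bdd_above ((\<lambda>v. sqrt (\<Sum>j<k. (g v j)\<^sup>2)) ` X)"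
      using partial_le full_bound by (intro bdd_aboveI2[where M="e 0"]) (meson order_trans)
    have "sqrt (\<Sum>j. (g v j)\<^sup>2) \<le> (SUP v\<in>X. sqrt (\<Sum>j<k. (g v j)\<^sup>2)) + e k" if "v \<in> X" for v
      using full_le[OF that, of k] cSUP_upper[OF that bdd_partial] by linarith
    then have "(SUP v\<in>X. sqrt (\<Sum>j. (g v j)\<^sup>2)) \<le> (SUP v\<in>X. sqrt (\<Sum>j<k. (g v j)\<^sup>2)) + e k"
      using X by (intro cSUP_least)
    then show ?thesis by simp
  qed
  have "(\<lambda>k. K\<^sup>2 / (1 - q\<^sup>2) * (q\<^sup>2) ^ k) \<longlonglongrightarrow> K\<^sup>2 / (1 - q\<^sup>2) * 0"
    using q by (intro tendsto_mult[OF tendsto_const LIMSEQ_power_zero]) (simp add: abs_square_less_1)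
  then have "e \<longlonglongrightarrow> sqrt (K\<^sup>2 / (1 - q\<^sup>2) * 0)"
    unfolding e_def by (rule tendsto_real_sqrt)
  then have lim_lower: "(\<lambda>k. (SUP v\<in>X. sqrt (\<Sum>j. (g v j)\<^sup>2)) - e k) \<longlonglongrightarrow> (SUP v\<in>X. sqrt (\<Sum>j. (g v j)\<^sup>2))"
    using tendsto_diff[OF tendsto_const] by fastforce
  show ?thesis
    by (rule tendsto_sandwich[OF always_eventually always_eventually lim_lower tendsto_const])
      (use lower upper in blast)+
qed

section \<open>Parseval's identity on the unit circle\<close>

lemma cos_int_mult_has_integral:
  "((\<lambda>t. cos (of_int m * t)) has_integral (if m = 0 then 2 * pi else 0)) {0..2 * pi}"
proof (cases "m = 0")
  case True
  then show ?thesis using has_integral_const_real[of "1::real" 0 "2 * pi"] by simp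
next
  case False
  have "((\<lambda>t. cos (of_int m * t)) has_integral
          sin (of_int m * (2 * pi)) / of_int m - sin (of_int m * 0) / of_int m) {0..2 * pi}"
    using False
    by (intro fundamental_theorem_of_calculus[of 0 "2 * pi" "\<lambda>t. sin (of_int m * t) / of_int m"])
      (auto intro!: derivative_eq_intros simp flip: has_real_derivative_iff_has_vector_derivative)
  moreover have "sin (of_int m * (2 * pi)) = 0"
    using sin_times_pi_eq_0[of "2 * of_int m"] by (simp add: mult_ac)
  ultimately show ?thesis using False by simp
qed

lemma norm_trig_poly_squared:
  fixes c :: "nat \<Rightarrow> real"
  shows "(cmod (\<Sum>j<N. cis (-(real j * t)) * complex_of_real (c j)))\<^sup>2
       = (\<Sum>j<N. \<Sum>k<N. c j * c k * cos ((real j - real k) * t))"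
proof -
  let ?u = "\<lambda>j. cis (-(real j * t)) * complex_of_real (c j)"
  have Re_term: "Re (?u j * cnj (?u k)) = c j * c k * cos ((real j - real k) * t)" for j k
    by (simp add: cis_cnj mult_ac right_diff_distrib cos_diff flip: cis_mult)
  have "(cmod (sum ?u {..<N}))\<^sup>2 = Re (sum ?u {..<N} * cnj (sum ?u {..<N}))"
    by (metis Re_complex_of_real complex_norm_square)
  also have "\<dots> = (\<Sum>j<N. \<Sum>k<N. Re (?u j * cnj (?u k)))"
    by (simp add: cnj_sum sum_product Re_sum)
  finally show ?thesis by (simp only: Re_term)
qed

lemma norm_trig_poly_squared_has_integral:
  fixes c :: "nat \<Rightarrow> real"
  shows "((\<lambda>t. (cmod (\<Sum>j<N. cis (-(real j * t)) * complex_of_real (c j)))\<^sup>2)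
          has_integral (2 * pi * (\<Sum>j<N. (c j)\<^sup>2))) {0..2 * pi}"
proof -
  have cos_diff: "((\<lambda>t. cos ((real j - real k) * t)) has_integral (if j = k then 2 * pi else 0)) {0..2 * pi}"
    for j k
    using cos_int_mult_has_integral[of "int j - int k"] by simp
  have "((\<lambda>t. \<Sum>j<N. \<Sum>k<N. c j * c k * cos ((real j - real k) * t)) has_integral
         (\<Sum>j<N. \<Sum>k<N. c j * c k * (if j = k then 2 * pi else 0))) {0..2 * pi}"
    by (intro has_integral_sum finite_lessThan has_integral_mult_right cos_diff)
  moreover have "(\<Sum>j<N. \<Sum>k<N. c j * c k * (if j = k then 2 * pi else 0)) = 2 * pi * (\<Sum>j<N. (c j)\<^sup>2)"
    by (simp add: if_distrib[of "\<lambda>x. _ * x"] sum_distrib_left power2_eq_square mult_ac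
        cong: if_cong)
  ultimately show ?thesis by (simp add: norm_trig_poly_squared)
qed

lemma parseval_geometric:
  fixes c :: "nat \<Rightarrow> real" and u :: "real \<Rightarrow> complex"
  assumes q: "0 \<le> q" "q < 1" and c: "\<And>j. \<bar>c j\<bar> \<le> K * q ^ j"
    and u: "\<And>t. (\<lambda>j. cis (-(real j * t)) * complex_of_real (c j)) sums u t"
  shows "((\<lambda>t. (cmod (u t))\<^sup>2) has_integral (2 * pi * (\<Sum>j. (c j)\<^sup>2))) {0..2 * pi}"
proof -
  define F where "F N t = (cmod (\<Sum>j<N. cis (-(real j * t)) * complex_of_real (c j)))\<^sup>2" for N t
  have geo: "(\<lambda>j. K * q ^ j) sums (K / (1 - q))"
    using sums_mult[OF geometric_sums[of q], of K] q by (simp add: divide_simps)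
  have "cmod (\<Sum>j<N. cis (-(real j * t)) * complex_of_real (c j)) \<le> K / (1 - q)" for N t
  proof -
    have "cmod (\<Sum>j<N. cis (-(real j * t)) * complex_of_real (c j))
        \<le> (\<Sum>j<N. cmod (cis (-(real j * t)) * complex_of_real (c j)))"
      by (rule norm_sum)
    also have "\<dots> = (\<Sum>j<N. \<bar>c j\<bar>)" by (simp add: norm_mult)
    also have "\<dots> \<le> (\<Sum>j<N. K * q ^ j)" by (intro sum_mono c)
    also have "\<dots> \<le> K / (1 - q)"
      using sum_le_suminf[OF sums_summable[OF geo], of "{..<N}"] c[of 0] q
      by (simp add: sums_unique[OF geo, symmetric])
    finally show ?thesis .
  qed
  then have F_bound: "norm (F N t) \<le> (K / (1 - q))\<^sup>2" for N t
    unfolding F_def by (simp add: power_mono)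
  have F_integral: "(F N has_integral (2 * pi * (\<Sum>j<N. (c j)\<^sup>2))) {0..2 * pi}" for N
    unfolding F_def by (rule norm_trig_poly_squared_has_integral)
  have F_lim: "(\<lambda>N. F N t) \<longlonglongrightarrow> (cmod (u t))\<^sup>2" for t
    unfolding F_def using u[of t] unfolding sums_def by (intro tendsto_intros)
  have dc: "(\<lambda>t. (cmod (u t))\<^sup>2) integrable_on {0..2 * pi}"
    "(\<lambda>N. integral {0..2 * pi} (F N)) \<longlonglongrightarrow> integral {0..2 * pi} (\<lambda>t. (cmod (u t))\<^sup>2)"
    using dominated_convergence[of F "{0..2 * pi}" "\<lambda>_. (K / (1 - q))\<^sup>2" "\<lambda>t. (cmod (u t))\<^sup>2"]
      F_integral F_bound F_lim by (auto simp: has_integral_integrable)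
  have "summable (\<lambda>j. (c j)\<^sup>2)" by (rule summable_power2_geometric_bound[OF q c])
  then have "(\<lambda>N. 2 * pi * (\<Sum>j<N. (c j)\<^sup>2)) \<longlonglongrightarrow> 2 * pi * (\<Sum>j. (c j)\<^sup>2)"
    by (intro tendsto_intros summable_LIMSEQ)
  then have "(\<lambda>N. integral {0..2 * pi} (F N)) \<longlonglongrightarrow> 2 * pi * (\<Sum>j. (c j)\<^sup>2)"
    using integral_unique[OF F_integral] by simp
  with dc show ?thesis
    using LIMSEQ_unique integrable_integral by metis
qed

section \<open>Block row operators\<close>

definition l1_entries :: "real^'c^'r \<Rightarrow> real" where
  "l1_entries M = (\<Sum>i\<in>UNIV. \<Sum>j\<in>UNIV. \<bar>M $ i $ j\<bar>)"

lemma l1_entries_nonneg: "0 \<le> l1_entries M"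
  unfolding l1_entries_def by (intro sum_nonneg) simp

lemma l1_entries_le:
  fixes M :: "real^'c^'r"
  assumes "\<And>i j. \<bar>M $ i $ j\<bar> \<le> b"
  shows "l1_entries M \<le> real CARD('r) * real CARD('c) * b"
proof -
  have "(\<Sum>j\<in>UNIV. \<bar>M $ i $ j\<bar>) \<le> real CARD('c) * b" for i
    using sum_bounded_above[of UNIV "\<lambda>j. \<bar>M $ i $ j\<bar>" b] assms by simp
  then show ?thesis
    using sum_bounded_above[of UNIV "\<lambda>i. \<Sum>j\<in>UNIV. \<bar>M $ i $ j\<bar>" "real CARD('c) * b"]
    unfolding l1_entries_def by (simp add: mult.assoc)
qed

lemma norm_vector_matrix_mult_le: "norm (x v* M) \<le> l1_entries M * norm x"
proof -
  have "norm (x v* M) = norm (transpose M *v x)" by simp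
  also have "\<dots> \<le> onorm ((*v) (transpose M)) * norm x"
    by (rule onorm[OF matrix_vector_mul_bounded_linear])
  also have "onorm ((*v) (transpose M)) \<le> l1_entries M"
  proof -
    have "l1_entries (transpose M) = l1_entries M"
      unfolding l1_entries_def transpose_def by simp (rule sum.swap)
    then show ?thesis
      using onorm_le_matrix_component_sum[of "transpose M"] by (simp add: l1_entries_def)
  qed
  finally show ?thesis by (simp add: mult_right_mono)
qed

lemma inner_block_row:
  fixes M :: "nat \<Rightarrow> real^'p^'m"
  shows "v \<bullet> (\<Sum>j<k. M j *v x j) = (\<Sum>j<k. (v v* M j) \<bullet> x j)"
  by (simp add: inner_sum_right dot_lmul_matrix)

lemma inner_block_row_le:
  fixes M :: "nat \<Rightarrow> real^'p^'m"
  assumes "(\<Sum>j<k. (norm (x j))\<^sup>2) \<le> 1"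
  shows "v \<bullet> (\<Sum>j<k. M j *v x j) \<le> sqrt (\<Sum>j<k. (norm (v v* M j))\<^sup>2)"
proof -
  have "v \<bullet> (\<Sum>j<k. M j *v x j) \<le> (\<Sum>j<k. norm (v v* M j) * norm (x j))"
    unfolding inner_block_row by (intro sum_mono norm_cauchy_schwarz)
  also have "\<dots> \<le> L2_set (\<lambda>j. norm (v v* M j)) {..<k} * L2_set (\<lambda>j. norm (x j)) {..<k}"
    using L2_set_mult_ineq[of "\<lambda>j. norm (v v* M j)" "\<lambda>j. norm (x j)" "{..<k}"] by simp
  also have "\<dots> \<le> L2_set (\<lambda>j. norm (v v* M j)) {..<k}"
    using assms by (intro mult_left_le L2_set_nonneg) (simp add: L2_set_def)
  finally show ?thesis by (simp add: L2_set_def)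
qed

lemma block_row_norming_input:
  fixes M :: "nat \<Rightarrow> real^'p^'m"
  assumes "norm v = 1"
  shows "\<exists>x. (\<Sum>j<k. (norm (x j))\<^sup>2) \<le> 1 \<and>
           sqrt (\<Sum>j<k. (norm (v v* M j))\<^sup>2) \<le> norm (\<Sum>j<k. M j *v x j)"
proof (cases "(\<Sum>j<k. (norm (v v* M j))\<^sup>2) = 0")
  case True
  then show ?thesis by (intro exI[of _ "\<lambda>_. 0"]) simp
next
  case False
  define s where "s = (\<Sum>j<k. (norm (v v* M j))\<^sup>2)"
  have s: "0 < s" using False sum_nonneg[of "{..<k}" "\<lambda>j. (norm (v v* M j))\<^sup>2"] by (simp add: s_def)
  define x where "x j = (1 / sqrt s) *\<^sub>R (v v* M j)" for j
  have "(\<Sum>j<k. (norm (x j))\<^sup>2) = 1"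
    using s by (simp add: x_def s_def power_mult_distrib power_divide flip: sum_divide_distrib)
  moreover have "sqrt s = v \<bullet> (\<Sum>j<k. M j *v x j)"
    using s unfolding inner_block_row
    by (simp add: x_def s_def power2_norm_eq_inner sum_divide_distrib[symmetric] real_div_sqrt)
  moreover have "v \<bullet> (\<Sum>j<k. M j *v x j) \<le> norm (\<Sum>j<k. M j *v x j)"
    using norm_cauchy_schwarz[of v] assms by simp
  ultimately show ?thesis by (intro exI[of _ x]) (simp add: s_def)
qed

lemma block_row_opnorm_eq:
  fixes M :: "nat \<Rightarrow> real^'p^'m"
  shows "(SUP x\<in>{x. (\<Sum>j<k. (norm (x j))\<^sup>2) \<le> 1}. norm (\<Sum>j<k. M j *v x j))
       = (SUP v\<in>{v. norm v = 1}. sqrt (\<Sum>j<k. (norm (v v* M j))\<^sup>2))"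
    (is "(SUP x\<in>?X. ?f x) = (SUP v\<in>?S. ?g v)")
proof (rule antisym)
  have S: "?S \<noteq> {}" using norm_axis_1 by blast
  have X: "?X \<noteq> {}" by (auto intro: exI[of _ "\<lambda>_. 0"])
  define B where "B = sqrt (\<Sum>j<k. (l1_entries (M j))\<^sup>2)"
  have g_le: "?g v \<le> B" if "v \<in> ?S" for v
    using that norm_vector_matrix_mult_le[of v] unfolding B_def
    by (intro real_sqrt_le_mono sum_mono power_mono) simp_all
  then have bdd_g: "bdd_above (?g ` ?S)" by (rule bdd_aboveI2)
  have dominated: "\<exists>v\<in>?S. ?f x \<le> ?g v" if "x \<in> ?X" for x
  proof (cases "?f x = 0")
    case True
    from S obtain v where "v \<in> ?S" by blast
    then show ?thesis by (intro bexI[of _ v]) (simp_all add: True sum_nonneg)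
  next
    case False
    define v where "v = (1 / ?f x) *\<^sub>R (\<Sum>j<k. M j *v x j)"
    have "norm v = 1" using False by (simp add: v_def)
    moreover have "?f x = v \<bullet> (\<Sum>j<k. M j *v x j)"
      using False by (simp add: v_def power2_norm_eq_inner[symmetric] power2_eq_square)
    ultimately show ?thesis
      using inner_block_row_le[where M=M and k=k and x=x and v=v] that by auto
  qed
  then have bdd_f: "bdd_above (?f ` ?X)"
    using g_le by (intro bdd_aboveI2[where M=B]) (meson order_trans)
  show "(SUP x\<in>?X. ?f x) \<le> (SUP v\<in>?S. ?g v)"
    using X bdd_g dominated by (rule cSUP_mono)
  show "(SUP v\<in>?S. ?g v) \<le> (SUP x\<in>?X. ?f x)"
    using S bdd_f block_row_norming_input by (intro cSUP_mono) auto
qed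

section \<open>Markov parameters and the transfer function\<close>

lemma norm_vec_power2: "(norm x)\<^sup>2 = (\<Sum>i\<in>UNIV. (norm (x $ i))\<^sup>2)"
  by (simp add: norm_vec_def L2_set_def sum_nonneg)

lemma matrix_inv_eqI:
  fixes M N :: "'a::field^'n^'n"
  assumes "M ** N = mat 1"
  shows "matrix_inv M = N"
proof -
  have "N ** M = mat 1" using assms matrix_left_right_inverse by blast
  with assms have inv: "M ** matrix_inv M = mat 1 \<and> matrix_inv M ** M = mat 1"
    unfolding matrix_inv_def by (rule someI[of _ N, OF conjI])
  have "matrix_inv M = matrix_inv M ** (M ** N)" by (simp add: assms matrix_mul_rid)
  also have "\<dots> = (matrix_inv M ** M) ** N" by (simp add: matrix_mul_assoc)
  also have "\<dots> = N" using inv by (simp add: matrix_mul_lid)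
  finally show ?thesis .
qed

definition markov :: "real^'n^'n \<Rightarrow> real^'p^'n \<Rightarrow> real^'n^'m \<Rightarrow> real^'p^'m \<Rightarrow> nat \<Rightarrow> real^'p^'m"
  where "markov A B C D j = (if j = 0 then D else C ** mpow A (j - 1) ** B)"

lemma Mk_apply_eq_sum: "Mk_apply A B C D k x = (\<Sum>j<k. markov A B C D j *v x j)"
proof (cases k)
  case (Suc k')
  have "(\<Sum>j<k. markov A B C D j *v x j) = D *v x 0 + (\<Sum>j\<in>{1..<k}. markov A B C D j *v x j)"
    unfolding Suc lessThan_Suc_atMost atMost_atLeast0
    by (simp add: sum.atLeast_Suc_atMost markov_def atLeastLessThanSuc_atLeastAtMost)
  also have "(\<Sum>j\<in>{1..<k}. markov A B C D j *v x j) = (\<Sum>j\<in>{1..<k}. (C ** mpow A (j - 1) ** B) *v x j)"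
    by (rule sum.cong) (auto simp: markov_def)
  finally show ?thesis by (simp add: Mk_apply_def Suc)
qed (simp add: Mk_apply_def)

context
  fixes A :: "real^'n^'n" and c q :: real
  assumes q: "0 < q" "q < 1" and mpow_decay: "\<And>k a b. \<bar>mpow A k $ a $ b\<bar> \<le> c * q ^ k"
begin

lemma resolvent_entry_sums:
  assumes zw: "z * w = 1" and w: "cmod w \<le> 1"
  shows "(\<lambda>j. w ^ Suc j * complex_of_real (mpow A j $ a $ b)) sums matrix_inv (mat z - cmat A) $ a $ b"
proof -
  have term_bound: "norm (w ^ i * complex_of_real (mpow A j $ a $ b)) \<le> c * q ^ j" for i j a b
  proof -
    have "cmod w ^ i \<le> 1" using w by (simp add: power_le_one)
    then have "norm (w ^ i * complex_of_real (mpow A j $ a $ b)) \<le> \<bar>mpow A j $ a $ b\<bar>"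
      by (simp add: norm_mult norm_power mult_left_le_one_le)
    then show ?thesis using mpow_decay order_trans by blast
  qed
  have summable: "summable (\<lambda>j. w ^ Suc j * complex_of_real (mpow A j $ a $ b))" for a b
    using q by (intro summable_comparison_test'[OF summable_mult[OF summable_geometric] term_bound]) simp
  define R where "R = (\<chi> a b. \<Sum>j. w ^ Suc j * complex_of_real (mpow A j $ a $ b))"
  have R_sums: "(\<lambda>j. w ^ Suc j * complex_of_real (mpow A j $ a $ b)) sums R $ a $ b" for a b
    unfolding R_def using summable by (simp add: summable_sums)
  have "((mat z - cmat A) ** R) $ a $ b = mat 1 $ a $ b" for a b
  proof -
    define s where "s j = w ^ j * complex_of_real (mpow A j $ a $ b)" for j
    have "(\<lambda>j. c * q ^ j) \<longlonglongrightarrow> 0"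
      using q by (intro tendsto_mult_right_zero LIMSEQ_power_zero) simp_all
    then have "s \<longlonglongrightarrow> 0"
      by (rule Lim_null_comparison[rotated]) (simp add: s_def term_bound)
    then have telescope: "(\<lambda>j. s j - s (Suc j)) sums s 0"
      using telescope_sums'[of s 0] by simp
    have step: "z * (w ^ Suc j * complex_of_real (mpow A j $ a $ b))
        - (\<Sum>k\<in>UNIV. cmat A $ a $ k * (w ^ Suc j * complex_of_real (mpow A j $ k $ b)))
        = s j - s (Suc j)" for j
    proof -
      have "z * (w ^ Suc j * complex_of_real (mpow A j $ a $ b)) = (z * w) * s j"
        by (simp add: s_def mult.assoc)
      moreover have "(\<Sum>k\<in>UNIV. cmat A $ a $ k * (w ^ Suc j * complex_of_real (mpow A j $ k $ b)))
          = w ^ Suc j * complex_of_real (\<Sum>k\<in>UNIV. A $ a $ k * mpow A j $ k $ b)"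
        by (simp add: cmat_def sum_distrib_left mult_ac)
      ultimately show ?thesis by (simp add: zw s_def matrix_matrix_mult_def)
    qed
    have "(\<lambda>j. s j - s (Suc j)) sums (z * R $ a $ b - (\<Sum>k\<in>UNIV. cmat A $ a $ k * R $ k $ b))"
      unfolding step[symmetric] by (intro sums_diff sums_mult sums_sum R_sums)
    then have "z * R $ a $ b - (\<Sum>k\<in>UNIV. cmat A $ a $ k * R $ k $ b) = s 0"
      using telescope sums_unique2 by blast
    moreover have "((mat z - cmat A) ** R) $ a $ b = z * R $ a $ b - (\<Sum>k\<in>UNIV. cmat A $ a $ k * R $ k $ b)"
      by (simp add: matrix_matrix_mult_def left_diff_distrib sum_subtractf
          Finite_Cartesian_Product.mat_def if_distrib[of "\<lambda>x. x * _"] cong: if_cong)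
    ultimately show ?thesis by (simp add: s_def Finite_Cartesian_Product.mat_def)
  qed
  then have "matrix_inv (mat z - cmat A) = R"
    by (intro matrix_inv_eqI) (simp add: Finite_Cartesian_Product.vec_eq_iff)
  with R_sums show ?thesis by simp
qed

lemma transfer_row_sums:
  "(\<lambda>j. cis (-(real j * \<theta>)) * complex_of_real ((v v* markov A B C D j) $ l)) sums
     (((\<chi> i. complex_of_real (v $ i)) v* transfer A B C D (cis \<theta>)) $ l)"
proof -
  define w where "w = cis (-\<theta>)"
  define R where "R = matrix_inv (mat (cis \<theta>) - cmat A)"
  define vc where "vc = (\<chi> i. complex_of_real (v $ i))"
  have R: "(\<lambda>j. w ^ Suc j * complex_of_real (mpow A j $ a $ b)) sums R $ a $ b" for a b
    unfolding w_def R_def by (rule resolvent_entry_sums) (simp_all add: cis_mult)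
  have tail: "(\<lambda>j. \<Sum>i\<in>UNIV. \<Sum>b\<in>UNIV. \<Sum>a\<in>UNIV. vc $ i * cmat C $ i $ a *
            (w ^ Suc j * complex_of_real (mpow A j $ a $ b)) * cmat B $ b $ l)
      sums (\<Sum>i\<in>UNIV. \<Sum>b\<in>UNIV. \<Sum>a\<in>UNIV. vc $ i * cmat C $ i $ a * R $ a $ b * cmat B $ b $ l)"
    by (intro sums_sum sums_mult sums_mult2 R)
  have shift: "(\<Sum>i\<in>UNIV. \<Sum>b\<in>UNIV. \<Sum>a\<in>UNIV. vc $ i * cmat C $ i $ a *
            (w ^ Suc j * complex_of_real (mpow A j $ a $ b)) * cmat B $ b $ l)
      = cis (-(real (Suc j) * \<theta>)) * complex_of_real ((v v* markov A B C D (Suc j)) $ l)" for j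
  proof -
    have "w ^ Suc j = cis (real (Suc j) * (-\<theta>))" unfolding w_def by (rule Complex.DeMoivre)
    then have "cis (-(real (Suc j) * \<theta>)) = w ^ Suc j" by simp
    then show ?thesis
      by (simp add: markov_def vc_def cmat_def vector_matrix_mult_def matrix_matrix_mult_def
          sum_distrib_left sum_distrib_right mult_ac)
  qed
  have head: "(vc v* transfer A B C D (cis \<theta>)) $ l =
      (\<Sum>i\<in>UNIV. \<Sum>b\<in>UNIV. \<Sum>a\<in>UNIV. vc $ i * cmat C $ i $ a * R $ a $ b * cmat B $ b $ l)
      + cis (-(real 0 * \<theta>)) * complex_of_real ((v v* markov A B C D 0) $ l)"
    unfolding transfer_def R_def[symmetric] markov_def
    by (simp add: vector_matrix_mult_def matrix_matrix_mult_def sum_distrib_left sum_distrib_right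
        mult_ac sum.distrib vc_def cmat_def distrib_left)
  from tail have "(\<lambda>j. cis (-(real (Suc j) * \<theta>)) * complex_of_real ((v v* markov A B C D (Suc j)) $ l))
      sums (\<Sum>i\<in>UNIV. \<Sum>b\<in>UNIV. \<Sum>a\<in>UNIV. vc $ i * cmat C $ i $ a * R $ a $ b * cmat B $ b $ l)"
    unfolding shift .
  then show ?thesis
    unfolding vc_def[symmetric] head by (subst sums_Suc_iff[symmetric]) simp
qed

lemma markov_row_decay: "\<exists>K. \<forall>v j. norm (v v* markov A B C D j) \<le> K * q ^ j * norm v"
proof -
  define K where "K = max (l1_entries D)
    (l1_entries C * (real CARD('n) * real CARD('n) * c) * l1_entries B / q)"
  have "norm (v v* markov A B C D j) \<le> K * q ^ j * norm v" for v j
  proof (cases j)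
    case 0
    have "norm (v v* D) \<le> l1_entries D * norm v" by (rule norm_vector_matrix_mult_le)
    also have "\<dots> \<le> K * norm v" unfolding K_def by (intro mult_right_mono) simp_all
    finally show ?thesis by (simp add: markov_def 0)
  next
    case (Suc i)
    have "norm (v v* markov A B C D j) = norm (((v v* C) v* mpow A i) v* B)"
      by (simp add: markov_def Suc vector_matrix_mul_assoc matrix_mul_assoc)
    also have "\<dots> \<le> l1_entries B * (l1_entries (mpow A i) * (l1_entries C * norm v))"
      using norm_vector_matrix_mult_le[of "(v v* C) v* mpow A i" B]
        norm_vector_matrix_mult_le[of "v v* C" "mpow A i"] norm_vector_matrix_mult_le[of v C]
      by (meson l1_entries_nonneg mult_left_mono order_trans)
    also have "\<dots> \<le> l1_entries B * (real CARD('n) * real CARD('n) * (c * q ^ i) * (l1_entries C * norm v))"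
      using l1_entries_le[of "mpow A i", OF mpow_decay]
      by (intro mult_left_mono mult_right_mono) (simp_all add: l1_entries_nonneg)
    also have "\<dots> = (l1_entries C * (real CARD('n) * real CARD('n) * c) * l1_entries B / q) * q ^ j * norm v"
      using q by (simp add: Suc field_simps)
    also have "\<dots> \<le> K * q ^ j * norm v"
      using q unfolding K_def by (intro mult_right_mono) simp_all
    finally show ?thesis .
  qed
  then show ?thesis by blast
qed

lemma H2_integrand_eq:
  "1 / (2 * pi) * integral {0..2 * pi}
      (\<lambda>\<theta>. (norm ((\<chi> i. complex_of_real (v $ i)) v* transfer A B C D (cis \<theta>)))\<^sup>2)
   = (\<Sum>j. (norm (v v* markov A B C D j))\<^sup>2)"
proof -
  obtain K where K: "\<And>v j. norm (v v* markov A B C D j) \<le> K * q ^ j * norm v"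
    using markov_row_decay by blast
  define r where "r j = v v* markov A B C D j" for j
  define G where "G \<theta> = (\<chi> i. complex_of_real (v $ i)) v* transfer A B C D (cis \<theta>)" for \<theta>
  have r_entry: "\<bar>r j $ l\<bar> \<le> (K * norm v) * q ^ j" for j l
    using component_le_norm_cart[of "r j" l] K[of v j] by (simp add: r_def mult_ac)
  have "((\<lambda>\<theta>. (cmod (G \<theta> $ l))\<^sup>2) has_integral 2 * pi * (\<Sum>j. (r j $ l)\<^sup>2)) {0..2 * pi}" for l
    using q r_entry transfer_row_sums unfolding r_def G_def by (intro parseval_geometric) simp_all
  then have "((\<lambda>\<theta>. \<Sum>l\<in>UNIV. (cmod (G \<theta> $ l))\<^sup>2) has_integral
      (\<Sum>l\<in>UNIV. 2 * pi * (\<Sum>j. (r j $ l)\<^sup>2))) {0..2 * pi}"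
    by (intro has_integral_sum) auto
  moreover have "(\<Sum>l\<in>UNIV. 2 * pi * (\<Sum>j. (r j $ l)\<^sup>2)) = 2 * pi * (\<Sum>j. (norm (r j))\<^sup>2)"
    using summable_power2_geometric_bound[OF _ _ r_entry] q
    by (simp add: norm_vec_power2 sum_distrib_left suminf_sum)
  ultimately have "integral {0..2 * pi} (\<lambda>\<theta>. (norm (G \<theta>))\<^sup>2) = 2 * pi * (\<Sum>j. (norm (r j))\<^sup>2)"
    by (simp add: norm_vec_power2 integral_unique)
  then show ?thesis by (simp add: G_def r_def)
qed

end

theorem lemma18:
  fixes A :: "real^'n^'n" and B :: "real^'p^'n" and C :: "real^'n^'m" and D :: "real^'p^'m"
  assumes "spectral_radius A < 1"
  shows "(\<lambda>k. Mk_opnorm A B C D k) \<longlonglongrightarrow> H2op_norm A B C D"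
proof -
  obtain c q where q: "0 < q" "q < 1" and decay: "\<And>k a b. \<bar>mpow A k $ a $ b\<bar> \<le> c * q ^ k"
    using mpow_entries_decay[OF assms] by blast
  obtain K where K: "\<And>v j. norm (v v* markov A B C D j) \<le> K * q ^ j * norm v"
    using markov_row_decay[OF q decay] by blast
  have Mk: "Mk_opnorm A B C D k
      = (SUP v\<in>{v. norm v = 1}. sqrt (\<Sum>j<k. (norm (v v* markov A B C D j))\<^sup>2))" for k
    unfolding Mk_opnorm_def Mk_apply_eq_sum by (rule block_row_opnorm_eq)
  have H2: "H2op_norm A B C D
      = (SUP v\<in>{v. norm v = 1}. sqrt (\<Sum>j. (norm (v v* markov A B C D j))\<^sup>2))"
    unfolding H2op_norm_def H2_integrand_eq[OF q decay] ..
  have "\<bar>norm (v v* markov A B C D j)\<bar> \<le> K * q ^ j" if "v \<in> {v. norm v = 1}" for v j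
    using K[of v j] that by simp
  moreover have "{v :: real^'m. norm v = 1} \<noteq> {}" using norm_axis_1 by blast
  ultimately show ?thesis
    unfolding Mk H2 using q by (intro tendsto_SUP_sqrt_partial_sums) auto
qed

end
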